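(* Let $n\ge2$, $\gamma\in\mathbb{R}$, $l,u\in\mathbb{R}^n$ with $l\le u$, and $\mathcal{X}=\{x\in\mathbb{R}^n:\sum_m x_m=\gamma,\ l_m\le x_m\le u_m\ \forall m\}\neq\emptyset$. Let $f:\mathbb{R}^n\to\mathbb{R}$ be differentiable and assume there is $L_2>0$ such that for all $x\in\mathcal{X}$, all $i\neq j$ and all $d$ with $d_i=-d_j$, $d_m=0$ for $m\notin\{i,j\}$ and $x+d\in\mathcal{X}$, $\|\nabla_{ij}f(x+d)-\nabla_{ij}f(x)\|_2\le L_2\|d\|_2$. Let $f^*=\inf_{\mathcal{X}}f$ and assume there is $\mu_2>0$ with \[ -L_2\min_{y\in\mathcal{X}}\Big\{\nabla f(x)^\top(y-x)+\tfrac{L_2}{2}\|y-x\|_2^2\Big\}\ge\mu_2(f(x)-f^* )\quad\text{for all }x\in\mathcal{X}. \] Let $x^0\in\mathcal{X}$ and $x^{k+1}=x^k+d^k$, where $(i_k,j_k,d^k)$ minimizes $\nabla f(x^k)^\top d+\frac{L_2}{2}\|d\|_2^2$ over all pairs $i\neq j$ and all $d$ with $d_i+d_j=0$, $d_m=0$ for $m\notin\{i,j\}$, and $x^k+d\in\mathcal{X}$ (the GS-q rule with step size $1/L_2$). Then for all $k\ge0$, \[ f(x^k)-f^*\le\Big(1-\frac{\mu_2}{L_2(n-1)}\Big)^k\big(f(x^0)-f^*\big). \]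
   Context: $\nabla_{ij}f(x)=(\nabla_if(x),\nabla_jf(x))\in\mathbb{R}^2$. The assumption on $\mu_2$ is the proximal-PL inequality in the 2-norm on the feasible set $\mathcal{X}$. *)

theory Defs
  imports "HOL-Analysis.Analysis"
begin

definition feasible_set :: "real \<Rightarrow> real^'n \<Rightarrow> real^'n \<Rightarrow> (real^'n) set" where
  "feasible_set \<gamma> l u = {x. (\<Sum>m\<in>UNIV. x $ m) = \<gamma> \<and> (\<forall>m. l $ m \<le> x $ m \<and> x $ m \<le> u $ m)}"

definition pair_dir :: "'n \<Rightarrow> 'n \<Rightarrow> real^'n \<Rightarrow> bool" where
  "pair_dir i j d \<longleftrightarrow> i \<noteq> j \<and> d $ i + d $ j = 0 \<and> (\<forall>m. m \<noteq> i \<and> m \<noteq> j \<longrightarrow> d $ m = 0)"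

definition pair_norm :: "real^'n \<Rightarrow> 'n \<Rightarrow> 'n \<Rightarrow> real" where
  "pair_norm g i j = sqrt ((g $ i)\<^sup>2 + (g $ j)\<^sup>2)"

end

theory Submission
  imports Defs
begin

text \<open>
  Along a pair direction, the two-coordinate Lipschitz bound on the gradient gives the descent
  inequality \<open>f (x + d) \<le> f x + g \<bullet> d + L/2 \<parallel>d\<parallel>\<^sup>2\<close>, so each GS-q step decreases \<open>f\<close> at least by
  minus the optimal pair model value \<open>m\<close>. Conversely, every feasible move \<open>y - x\<close> has zero sum and
  can be peeled into conformal pair moves, each removing a coordinate from its support, so at most
  \<open>n - 1\<close> of them are needed; since the pieces are conformal the quadratic model is superadditive
  over them, whence the model of \<open>y - x\<close> is at least \<open>(n - 1) m\<close>. Combined with the proximal-PL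
  inequality this yields the contraction factor \<open>1 - \<mu>/(L (n - 1))\<close> per step.
\<close>

definition quad_model :: "'a::real_inner \<Rightarrow> real \<Rightarrow> 'a \<Rightarrow> real" where
  "quad_model g L d = g \<bullet> d + L / 2 * (norm d)\<^sup>2"

lemma feasible_set_eq_box_hyperplane:
  "feasible_set \<gamma> l u = cbox l u \<inter> {x. (\<chi> m. 1) \<bullet> x = \<gamma>}"
  by (auto simp: feasible_set_def mem_box_cart inner_vec_def)

lemma convex_feasible_set: "convex (feasible_set \<gamma> l u)"
  unfolding feasible_set_eq_box_hyperplane by (intro convex_Int convex_box convex_hyperplane)

lemma compact_feasible_set: "compact (feasible_set \<gamma> l u)"
  unfolding feasible_set_eq_box_hyperplane by (intro compact_Int_closed compact_cbox closed_hyperplane)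

lemma sum_UNIV_eq_pair:
  fixes h :: "'n::finite \<Rightarrow> 'a::comm_monoid_add"
  assumes "i \<noteq> j" "\<forall>m. m \<noteq> i \<and> m \<noteq> j \<longrightarrow> h m = 0"
  shows "(\<Sum>m\<in>UNIV. h m) = h i + h j"
proof -
  have "(\<Sum>m\<in>UNIV. h m) = (\<Sum>m\<in>{i,j}. h m)"
    by (rule sum.mono_neutral_right) (use assms in auto)
  then show ?thesis using assms by simp
qed

lemma pair_dir_sum_eq_0: "pair_dir i j d \<Longrightarrow> (\<Sum>m\<in>UNIV. d $ m) = 0"
  using sum_UNIV_eq_pair[of i j "\<lambda>m. d $ m"] by (simp add: pair_dir_def)

lemma inner_eq_pair:
  fixes v d :: "real^'n"
  assumes "i \<noteq> j" "\<forall>m. m \<noteq> i \<and> m \<noteq> j \<longrightarrow> d $ m = 0"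
  shows "v \<bullet> d = v $ i * d $ i + v $ j * d $ j"
  unfolding inner_vec_def inner_real_def by (rule sum_UNIV_eq_pair) (use assms in auto)

lemma norm_eq_pair_norm:
  fixes d :: "real^'n"
  assumes "i \<noteq> j" "\<forall>m. m \<noteq> i \<and> m \<noteq> j \<longrightarrow> d $ m = 0"
  shows "norm d = pair_norm d i j"
  unfolding norm_eq_sqrt_inner pair_norm_def inner_eq_pair[OF assms] by (simp add: power2_eq_square)

lemma inner_le_pair_norm:
  fixes v d :: "real^'n"
  assumes "i \<noteq> j" "\<forall>m. m \<noteq> i \<and> m \<noteq> j \<longrightarrow> d $ m = 0"
  shows "v \<bullet> d \<le> pair_norm v i j * norm d"
proof -
  have "v \<bullet> d = Complex (v $ i) (v $ j) \<bullet> Complex (d $ i) (d $ j)"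
    by (simp add: inner_eq_pair[OF assms] inner_complex_def)
  also have "\<dots> \<le> norm (Complex (v $ i) (v $ j)) * norm (Complex (d $ i) (d $ j))"
    by (rule norm_cauchy_schwarz)
  finally show ?thesis by (simp add: norm_eq_pair_norm[OF assms] pair_norm_def norm_complex_def)
qed

lemma descent_lemma_segment:
  fixes f :: "'a::real_inner \<Rightarrow> real"
  assumes deriv: "\<And>y. (f has_derivative (\<lambda>h. grad y \<bullet> h)) (at y)"
    and variation: "\<And>t. 0 \<le> t \<Longrightarrow> t \<le> 1 \<Longrightarrow> (grad (x + t *\<^sub>R d) - grad x) \<bullet> d \<le> L * t * (norm d)\<^sup>2"
  shows "f (x + d) \<le> f x + quad_model (grad x) L d"
proof -
  define \<phi> where "\<phi> t = f (x + t *\<^sub>R d) - t * (grad x \<bullet> d) - L / 2 * t\<^sup>2 * (norm d)\<^sup>2" for t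
  have "((\<lambda>t. f (x + t *\<^sub>R d)) has_real_derivative grad (x + t *\<^sub>R d) \<bullet> d) (at t)" for t
  proof -
    have "((\<lambda>t. x + t *\<^sub>R d) has_derivative (\<lambda>s. s *\<^sub>R d)) (at t)"
      by (auto intro!: derivative_eq_intros)
    from has_derivative_compose[OF this deriv] show ?thesis
      by (simp add: has_field_derivative_def mult.commute[of _ "grad _ \<bullet> d"])
  qed
  then have "(\<phi> has_real_derivative (grad (x + t *\<^sub>R d) - grad x) \<bullet> d - L * t * (norm d)\<^sup>2) (at t)" for t
    unfolding \<phi>_def by (auto intro!: derivative_eq_intros simp: inner_diff_left power2_eq_square)
  then have "\<phi> 1 \<le> \<phi> 0"
    using variation by (intro DERIV_nonpos_imp_nonincreasing[of 0 1]) force+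
  then show ?thesis by (simp add: \<phi>_def quad_model_def)
qed

definition pair_lipschitz :: "(real^'n \<Rightarrow> real^'n) \<Rightarrow> real \<Rightarrow> (real^'n) set \<Rightarrow> bool" where
  "pair_lipschitz grad L X \<longleftrightarrow> (\<forall>x\<in>X. \<forall>i j d. pair_dir i j d \<and> x + d \<in> X
     \<longrightarrow> pair_norm (grad (x + d) - grad x) i j \<le> L * norm d)"

lemma pair_lipschitz_gradient_variation:
  assumes lip: "pair_lipschitz grad L X" and "convex X"
    and x: "x \<in> X" and xd: "x + d \<in> X" and d: "pair_dir i j d" and t: "0 \<le> t" "t \<le> 1"
  shows "(grad (x + t *\<^sub>R d) - grad x) \<bullet> d \<le> L * t * (norm d)\<^sup>2"
proof -
  have ij: "i \<noteq> j" and supp: "\<forall>m. m \<noteq> i \<and> m \<noteq> j \<longrightarrow> d $ m = 0"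
    using d by (auto simp: pair_dir_def)
  have "x + t *\<^sub>R d = (1 - t) *\<^sub>R x + t *\<^sub>R (x + d)" by (simp add: algebra_simps)
  then have "x + t *\<^sub>R d \<in> X" using \<open>convex X\<close> x xd t by (metis convexD_alt)
  moreover have "pair_dir i j (t *\<^sub>R d)" using d by (auto simp: pair_dir_def distrib_left[symmetric])
  ultimately have "pair_norm (grad (x + t *\<^sub>R d) - grad x) i j \<le> L * norm (t *\<^sub>R d)"
    using lip x unfolding pair_lipschitz_def by blast
  then have pn: "pair_norm (grad (x + t *\<^sub>R d) - grad x) i j \<le> L * (t * norm d)"
    using t by simp
  have "(grad (x + t *\<^sub>R d) - grad x) \<bullet> d \<le> pair_norm (grad (x + t *\<^sub>R d) - grad x) i j * norm d"
    by (rule inner_le_pair_norm[OF ij supp])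
  also have "\<dots> \<le> L * (t * norm d) * norm d" using pn by (simp add: mult_right_mono)
  finally show ?thesis by (simp add: power2_eq_square mult.assoc)
qed

lemma feasible_add_between:
  assumes x: "x \<in> feasible_set \<gamma> l u" and xd: "x + d \<in> feasible_set \<gamma> l u"
    and e_sum: "(\<Sum>m\<in>UNIV. e $ m) = 0" and between: "\<forall>m. 0 \<le> e $ m * (d $ m - e $ m)"
  shows "x + e \<in> feasible_set \<gamma> l u"
proof -
  have "l $ m \<le> x $ m + e $ m \<and> x $ m + e $ m \<le> u $ m" for m
  proof -
    have "l $ m \<le> x $ m" "x $ m \<le> u $ m" "l $ m \<le> x $ m + d $ m" "x $ m + d $ m \<le> u $ m"
      using x xd by (auto simp: feasible_set_def)
    then show ?thesis using between[rule_format, of m] by (auto simp: zero_le_mult_iff)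
  qed
  with x e_sum show ?thesis by (simp add: feasible_set_def sum.distrib)
qed

lemma quad_model_superadditive:
  fixes e d :: "'a::real_inner"
  assumes "0 \<le> L" "0 \<le> e \<bullet> d"
  shows "quad_model g L e + quad_model g L d \<le> quad_model g L (e + d)"
proof -
  have "(norm e)\<^sup>2 + (norm d)\<^sup>2 \<le> (norm (e + d))\<^sup>2"
    using assms(2) by (simp add: power2_norm_eq_inner inner_add_left inner_add_right inner_commute)
  then show ?thesis using assms(1)
    by (simp add: quad_model_def inner_add_right distrib_left[symmetric] mult_left_mono)
qed

lemma pair_dir_split_off:
  fixes d :: "real^'n"
  assumes sum0: "(\<Sum>m\<in>UNIV. d $ m) = 0" and "d \<noteq> 0"
  obtains i j e where "pair_dir i j e" "\<forall>m. 0 \<le> e $ m * (d $ m - e $ m)"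
    "card {m. (d - e) $ m \<noteq> 0} < card {m. d $ m \<noteq> 0}" "2 \<le> card {m. d $ m \<noteq> 0}"
proof -
  have "\<not> (\<forall>m. d $ m \<le> 0)"
  proof
    assume "\<forall>m. d $ m \<le> 0"
    then have "\<forall>m. - d $ m = 0" using sum0 sum_nonneg_eq_0_iff[of UNIV "\<lambda>m. - d $ m"]
      by (simp add: sum_negf)
    with \<open>d \<noteq> 0\<close> show False by (simp add: vec_eq_iff)
  qed
  then obtain i where di: "d $ i > 0" by (auto simp: not_le)
  have "\<not> (\<forall>m. 0 \<le> d $ m)"
  proof
    assume "\<forall>m. 0 \<le> d $ m"
    then have "\<forall>m. d $ m = 0" using sum0 sum_nonneg_eq_0_iff[of UNIV "\<lambda>m. d $ m"] by simp
    with \<open>d \<noteq> 0\<close> show False by (simp add: vec_eq_iff)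
  qed
  then obtain j where dj: "d $ j < 0" by (auto simp: not_le)
  have ij: "i \<noteq> j" using di dj by auto
  \<comment> \<open>moving \<open>t\<close> units from \<open>i\<close> to \<open>j\<close> zeroes one of the two coordinates without overshooting\<close>
  define t where "t = min (d $ i) (- d $ j)"
  define e :: "real^'n" where "e = (\<chi> m. if m = i then t else if m = j then - t else 0)"
  have "pair_dir i j e" using ij by (simp add: pair_dir_def e_def)
  moreover have "0 \<le> e $ m * (d $ m - e $ m)" for m
    using ij di dj by (simp add: e_def t_def mult_nonneg_nonpos)
  moreover have "card {m. (d - e) $ m \<noteq> 0} < card {m. d $ m \<noteq> 0}"
  proof (rule psubset_card_mono)
    have "{m. (d - e) $ m \<noteq> 0} \<subseteq> {m. d $ m \<noteq> 0}" using di dj by (auto simp: e_def)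
    moreover have "(d - e) $ i = 0 \<or> (d - e) $ j = 0" using ij by (auto simp: e_def t_def min_def)
    ultimately show "{m. (d - e) $ m \<noteq> 0} \<subset> {m. d $ m \<noteq> 0}" using di dj by auto
  qed simp
  moreover have "2 \<le> card {m. d $ m \<noteq> 0}"
  proof -
    have "card {i, j} \<le> card {m. d $ m \<noteq> 0}" using di dj by (intro card_mono) auto
    then show ?thesis using ij by simp
  qed
  ultimately show ?thesis using that by blast
qed

lemma quad_model_ge_pair_moves:
  fixes x d g :: "real^'n"
  assumes x: "x \<in> feasible_set \<gamma> l u" and xd: "x + d \<in> feasible_set \<gamma> l u"
    and L: "0 \<le> L" and \<mu>: "\<mu> \<le> 0"
    and pair_ge: "\<And>i j e. pair_dir i j e \<Longrightarrow> x + e \<in> feasible_set \<gamma> l u \<Longrightarrow> \<mu> \<le> quad_model g L e"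
  shows "real (card {m. d $ m \<noteq> 0} - 1) * \<mu> \<le> quad_model g L d"
  using xd
proof (induction "card {m. d $ m \<noteq> 0}" arbitrary: d rule: less_induct)
  case less
  show ?case
  proof (cases "d = 0")
    case True
    then show ?thesis by (simp add: quad_model_def)
  next
    case False
    have "(\<Sum>m\<in>UNIV. d $ m) = 0"
      using x less.prems by (simp add: feasible_set_def sum.distrib)
    then obtain i j e where e: "pair_dir i j e" and between: "\<forall>m. 0 \<le> e $ m * (d $ m - e $ m)"
      and card_lt: "card {m. (d - e) $ m \<noteq> 0} < card {m. d $ m \<noteq> 0}"
      and card2: "2 \<le> card {m. d $ m \<noteq> 0}"
      using pair_dir_split_off False by blast
    have "x + e \<in> feasible_set \<gamma> l u"
      using feasible_add_between[OF x less.prems pair_dir_sum_eq_0[OF e] between] .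
    then have \<mu>_le_e: "\<mu> \<le> quad_model g L e" using pair_ge e by blast
    have "(\<Sum>m\<in>UNIV. (d - e) $ m) = 0"
      using \<open>(\<Sum>m\<in>UNIV. d $ m) = 0\<close> pair_dir_sum_eq_0[OF e] by (simp add: sum_subtractf)
    moreover have "\<forall>m. 0 \<le> (d - e) $ m * (d $ m - (d - e) $ m)"
      using between by (simp add: mult.commute)
    ultimately have "x + (d - e) \<in> feasible_set \<gamma> l u"
      using feasible_add_between[OF x less.prems] by blast
    then have IH: "real (card {m. (d - e) $ m \<noteq> 0} - 1) * \<mu> \<le> quad_model g L (d - e)"
      using less.hyps card_lt by blast
    have "real (card {m. d $ m \<noteq> 0} - 1) * \<mu> \<le> (1 + real (card {m. (d - e) $ m \<noteq> 0} - 1)) * \<mu>"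
      using card_lt card2 \<mu> by (intro mult_right_mono_neg) auto
    also have "\<dots> \<le> quad_model g L e + quad_model g L (d - e)"
      using \<mu>_le_e IH by (simp add: distrib_right)
    also have "\<dots> \<le> quad_model g L d"
    proof -
      have "0 \<le> e \<bullet> (d - e)" using between by (simp add: inner_vec_def sum_nonneg)
      then show ?thesis using quad_model_superadditive[OF L] by fastforce
    qed
    finally show ?thesis .
  qed
qed

definition gs_q_step :: "real^'n \<Rightarrow> real \<Rightarrow> (real^'n) set \<Rightarrow> real^'n \<Rightarrow> real^'n \<Rightarrow> bool" where
  "gs_q_step g L X x d \<longleftrightarrow> (\<exists>i j. pair_dir i j d) \<and> x + d \<in> X \<and>
     (\<forall>i j e. pair_dir i j e \<and> x + e \<in> X \<longrightarrow> quad_model g L d \<le> quad_model g L e)"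

lemma gs_q_step_model_le:
  fixes x y d g :: "real^'n"
  assumes n2: "2 \<le> CARD('n)" and L: "0 \<le> L" and x: "x \<in> feasible_set \<gamma> l u"
    and step: "gs_q_step g L (feasible_set \<gamma> l u) x d" and y: "y \<in> feasible_set \<gamma> l u"
  shows "(real CARD('n) - 1) * quad_model g L d \<le> quad_model g L (y - x)"
proof -
  obtain i j where "pair_dir i j d"
    and opt: "\<And>i j e. pair_dir i j e \<Longrightarrow> x + e \<in> feasible_set \<gamma> l u \<Longrightarrow> quad_model g L d \<le> quad_model g L e"
    using step by (auto simp: gs_q_step_def)
  then have "pair_dir i j 0" by (simp add: pair_dir_def)
  then have nonpos: "quad_model g L d \<le> 0" using opt[of i j 0] x by (simp add: quad_model_def)
  have "card {m. (y - x) $ m \<noteq> 0} \<le> CARD('n)" by (rule card_mono) auto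
  then have "real (card {m. (y - x) $ m \<noteq> 0} - 1) \<le> real CARD('n) - 1"
    using n2 by linarith
  then have "(real CARD('n) - 1) * quad_model g L d
      \<le> real (card {m. (y - x) $ m \<noteq> 0} - 1) * quad_model g L d"
    using nonpos by (rule mult_right_mono_neg)
  also have "\<dots> \<le> quad_model g L (y - x)"
    using y by (intro quad_model_ge_pair_moves[OF x _ L nonpos opt]) simp
  finally show ?thesis .
qed

lemma gs_q_step_contraction:
  fixes f :: "real^'n \<Rightarrow> real" and x d :: "real^'n"
  assumes n2: "2 \<le> CARD('n)" and L: "0 < L"
    and deriv: "\<And>y. (f has_derivative (\<lambda>h. grad y \<bullet> h)) (at y)"
    and lip: "pair_lipschitz grad L (feasible_set \<gamma> l u)"
    and pl: "\<mu> * (f x - fstar)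
      \<le> - L * Inf {quad_model (grad x) L (y - x) | y. y \<in> feasible_set \<gamma> l u}"
    and x: "x \<in> feasible_set \<gamma> l u" and step: "gs_q_step (grad x) L (feasible_set \<gamma> l u) x d"
  shows "f (x + d) - fstar \<le> (1 - \<mu> / (L * (real CARD('n) - 1))) * (f x - fstar)"
proof -
  define N where "N = real CARD('n) - 1"
  define m where "m = quad_model (grad x) L d"
  obtain i j where d: "pair_dir i j d" and xd: "x + d \<in> feasible_set \<gamma> l u"
    using step by (auto simp: gs_q_step_def)
  have descent: "f (x + d) \<le> f x + m"
    unfolding m_def using pair_lipschitz_gradient_variation[OF lip convex_feasible_set x xd d]
    by (rule descent_lemma_segment[OF deriv])
  have "N * m \<le> Inf {quad_model (grad x) L (y - x) | y. y \<in> feasible_set \<gamma> l u}"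
    using gs_q_step_model_le[OF n2 _ x step] L x unfolding N_def m_def
    by (intro cInf_greatest) auto
  then have "L * (N * m) \<le> L * Inf {quad_model (grad x) L (y - x) | y. y \<in> feasible_set \<gamma> l u}"
    using L by (simp add: mult_left_mono)
  then have "(L * N) * m \<le> - \<mu> * (f x - fstar)"
    using pl by (simp add: mult.assoc)
  moreover have "0 < L * N" using n2 L by (simp add: N_def)
  ultimately have m_le: "m \<le> - \<mu> * (f x - fstar) / (L * N)"
    by (simp only: pos_le_divide_eq mult.commute[of m])
  have "f (x + d) - fstar \<le> (f x - fstar) - \<mu> * (f x - fstar) / (L * N)"
    using descent m_le by simp
  also have "\<dots> = (1 - \<mu> / (L * N)) * (f x - fstar)"
    by (simp add: left_diff_distrib)
  finally show ?thesis by (simp add: N_def)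
qed

lemma contraction_power_bound:
  fixes a :: "nat \<Rightarrow> real"
  assumes contr: "\<And>k. a (Suc k) \<le> c * a k" and nonneg: "\<And>k. 0 \<le> a k"
  shows "a k \<le> c ^ k * a 0"
proof (cases "0 \<le> c")
  case True
  show ?thesis
  proof (induction k)
    case (Suc k)
    have "a (Suc k) \<le> c * a k" by (rule contr)
    also have "\<dots> \<le> c * (c ^ k * a 0)" using Suc True by (rule mult_left_mono)
    finally show ?case by (simp add: mult.assoc)
  qed simp
next
  case False
  have vanish: "a (Suc k) = 0" for k
    using contr[of k] nonneg[of k] nonneg[of "Suc k"] False
    by (meson mult_nonneg_nonpos2 not_le order_antisym order_trans less_imp_le)
  have "c * a 0 \<le> 0" using False nonneg[of 0] by (simp add: mult_nonpos_nonneg)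
  moreover have "0 \<le> c * a 0" using contr[of 0] nonneg[of 1] by simp
  ultimately have "c * a 0 = 0" by simp
  then have "a 0 = 0" using False by simp
  with vanish show ?thesis by (cases k) simp_all
qed

theorem mainTheorem11:
  fixes f :: "real^'n \<Rightarrow> real" and grad :: "real^'n \<Rightarrow> real^'n"
    and \<gamma> L2 \<mu>2 :: real and l u :: "real^'n" and xs :: "nat \<Rightarrow> real^'n"
  assumes n2: "CARD('n) \<ge> 2"
    and lu: "\<forall>m. l $ m \<le> u $ m"
    and nonempty: "feasible_set \<gamma> l u \<noteq> {}"
    and diff: "\<forall>x. (f has_derivative (\<lambda>h. grad x \<bullet> h)) (at x)"
    and L2pos: "L2 > 0"
    and lip: "\<forall>x\<in>feasible_set \<gamma> l u. \<forall>i j d. i \<noteq> j \<and> d $ i = - d $ j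
              \<and> (\<forall>m. m \<noteq> i \<and> m \<noteq> j \<longrightarrow> d $ m = 0) \<and> x + d \<in> feasible_set \<gamma> l u
              \<longrightarrow> pair_norm (grad (x + d) - grad x) i j \<le> L2 * norm d"
    and mu2pos: "\<mu>2 > 0"
    and pl: "\<forall>x\<in>feasible_set \<gamma> l u.
              - L2 * Inf {grad x \<bullet> (y - x) + L2 / 2 * (norm (y - x))\<^sup>2 | y. y \<in> feasible_set \<gamma> l u}
              \<ge> \<mu>2 * (f x - Inf (f ` feasible_set \<gamma> l u))"
    and x0: "xs 0 \<in> feasible_set \<gamma> l u"
    and step: "\<forall>k. \<exists>i j. pair_dir i j (xs (Suc k) - xs k) \<and> xs (Suc k) \<in> feasible_set \<gamma> l u
              \<and> (\<forall>i' j' d'. pair_dir i' j' d' \<and> xs k + d' \<in> feasible_set \<gamma> l u \<longrightarrow>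
                   grad (xs k) \<bullet> (xs (Suc k) - xs k) + L2 / 2 * (norm (xs (Suc k) - xs k))\<^sup>2
                   \<le> grad (xs k) \<bullet> d' + L2 / 2 * (norm d')\<^sup>2)"
  shows "\<forall>k. f (xs k) - Inf (f ` feasible_set \<gamma> l u)
           \<le> (1 - \<mu>2 / (L2 * (real CARD('n) - 1))) ^ k * (f (xs 0) - Inf (f ` feasible_set \<gamma> l u))"
proof
  fix k
  let ?X = "feasible_set \<gamma> l u"
  define fstar where "fstar = Inf (f ` ?X)"
  have gs_q: "gs_q_step (grad (xs k)) L2 ?X (xs k) (xs (Suc k) - xs k)" for k
    using step by (auto simp: gs_q_step_def quad_model_def)
  have feasible: "xs k \<in> ?X" for k
    using gs_q x0 by (cases k) (auto simp: gs_q_step_def)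
  have "continuous_on ?X f"
    using diff by (intro has_derivative_continuous_on) (auto intro: has_derivative_at_withinI)
  then have "bdd_below (f ` ?X)"
    by (intro bounded_imp_bdd_below compact_imp_bounded compact_continuous_image compact_feasible_set)
  then have gap_nonneg: "0 \<le> f (xs k) - fstar" for k
    using feasible by (auto simp: fstar_def intro: cInf_lower)
  have lipschitz: "pair_lipschitz grad L2 ?X"
    using lip by (auto simp: pair_lipschitz_def pair_dir_def eq_neg_iff_add_eq_0)
  have "f (xs (Suc k)) - fstar \<le> (1 - \<mu>2 / (L2 * (real CARD('n) - 1))) * (f (xs k) - fstar)" for k
    using gs_q_step_contraction[OF n2 L2pos _ lipschitz _ feasible gs_q] diff pl feasible[of k]
    by (auto simp: fstar_def quad_model_def)
  then show "f (xs k) - fstar \<le> (1 - \<mu>2 / (L2 * (real CARD('n) - 1))) ^ k * (f (xs 0) - fstar)"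
    using gap_nonneg by (rule contraction_power_bound)
qed

end
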